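(* Let $\langle B,\wedge,{}'\rangle$ be an algebra with $\wedge$ binary and ${}'$ unary satisfying $x\wedge(y\wedge z)\approx (z\wedge x)\wedge y$ and $x\approx (x'\wedge y)'\wedge(x'\wedge y')'$. Then $x\wedge(y\wedge z)=y\wedge(z\wedge x)$ for all $x,y,z\in B$. *)

theory Defs
  imports Main
begin

end

theory Submission
  imports Defs
begin

text \<open>The rotation law alone already identifies every product of five factors with every
  other, whatever the order of the factors and the bracketing. The second axiom makes every
  element a product, so every \<open>z\<close> can be written as \<open>u \<cdot> (v \<cdot> w)\<close>, and then
  both sides of \<open>x \<cdot> (y \<cdot> z) = y \<cdot> (z \<cdot> x)\<close> are products of five factors.\<close>

locale rotative_magma =
  fixes mult :: "'a \<Rightarrow> 'a \<Rightarrow> 'a" (infixl \<open>\<cdot>\<close> 70)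
  assumes rotate: "x \<cdot> (y \<cdot> z) = (z \<cdot> x) \<cdot> y"
begin

lemma rotate_medial: "x \<cdot> (y \<cdot> (z \<cdot> w)) = (x \<cdot> z) \<cdot> (y \<cdot> w)"
proof -
  have "x \<cdot> (y \<cdot> (z \<cdot> w)) = ((z \<cdot> w) \<cdot> x) \<cdot> y" by (rule rotate)
  also have "\<dots> = (w \<cdot> (x \<cdot> z)) \<cdot> y" by (simp only: rotate[of w x z])
  also have "\<dots> = (x \<cdot> z) \<cdot> (y \<cdot> w)" by (rule rotate[symmetric])
  finally show ?thesis .
qed

lemma cyclic_five_factors:
  "x \<cdot> (y \<cdot> (u \<cdot> (v \<cdot> w))) = y \<cdot> ((u \<cdot> (v \<cdot> w)) \<cdot> x)"
proof -
  have "x \<cdot> (y \<cdot> (u \<cdot> (v \<cdot> w))) = x \<cdot> (((v \<cdot> w) \<cdot> y) \<cdot> u)"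
    by (simp only: rotate[of y u "v \<cdot> w"])
  also have "\<dots> = (u \<cdot> x) \<cdot> ((v \<cdot> w) \<cdot> y)" by (rule rotate)
  also have "\<dots> = (y \<cdot> (u \<cdot> x)) \<cdot> (v \<cdot> w)" by (rule rotate)
  also have "\<dots> = y \<cdot> (v \<cdot> ((u \<cdot> x) \<cdot> w))" by (rule rotate_medial[symmetric])
  also have "\<dots> = y \<cdot> (v \<cdot> (x \<cdot> (w \<cdot> u)))" by (simp only: rotate[of x w u])
  also have "\<dots> = y \<cdot> (((w \<cdot> u) \<cdot> v) \<cdot> x)" by (simp only: rotate[of v x "w \<cdot> u"])
  also have "\<dots> = y \<cdot> ((u \<cdot> (v \<cdot> w)) \<cdot> x)" by (simp only: rotate[of u v w])
  finally show ?thesis .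
qed

lemma cyclic_if_surjective:
  assumes surj: "\<And>z. \<exists>u v. z = u \<cdot> v"
  shows "x \<cdot> (y \<cdot> z) = y \<cdot> (z \<cdot> x)"
proof -
  obtain u t where "z = u \<cdot> t" using surj by blast
  moreover obtain v w where "t = v \<cdot> w" using surj by blast
  ultimately show ?thesis by (simp only: cyclic_five_factors)
qed

end

theorem lemma5p25:
  fixes meet :: "'b \<Rightarrow> 'b \<Rightarrow> 'b" and c :: "'b \<Rightarrow> 'b"
  assumes ax1: "\<And>x y z. meet x (meet y z) = meet (meet z x) y"
    and ax2: "\<And>x y. x = meet (c (meet (c x) y)) (c (meet (c x) (c y)))"
  shows "\<forall>x y z. meet x (meet y z) = meet y (meet z x)"
proof -
  interpret rotative_magma meet by unfold_locales (rule ax1)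
  have "\<exists>u v. z = meet u v" for z using ax2 by blast
  then show ?thesis using cyclic_if_surjective by blast
qed

end
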